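(* For any finite abstract simplicial complex $G$, $\sum_{x\in G}\omega(x)\chi(S(x))=0$.
   Context: A finite abstract simplicial complex $G$ is a finite set of non-empty finite sets closed under taking non-empty subsets; $\omega(x)=(-1)^{|x|-1}$. The graph $G_1$ has vertex set $G$, with $x\neq y$ adjacent iff $x\subset y$ or $y\subset x$. $S(x)=\{y\in G: y\subsetneq x\text{ or }x\subsetneq y\}$, and $\chi(S(x))$ is the Euler characteristic $\sum_K(-1)^{|K|-1}$ over non-empty cliques $K$ of the subgraph of $G_1$ induced on $S(x)$. *)

theory Defs
  imports Main
begin

definition simplicial_complex :: "'a set set \<Rightarrow> bool" where
  "simplicial_complex G \<longleftrightarrow> finite G \<and>
     (\<forall>x\<in>G. finite x \<and> x \<noteq> {} \<and> (\<forall>y. y \<subseteq> x \<and> y \<noteq> {} \<longrightarrow> y \<in> G))"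

definition omega :: "'a set \<Rightarrow> int" where
  "omega x = (-1) ^ (card x - 1)"

definition adj1 :: "'a set \<Rightarrow> 'a set \<Rightarrow> bool" where
  "adj1 x y \<longleftrightarrow> x \<noteq> y \<and> (x \<subseteq> y \<or> y \<subseteq> x)"

definition unit_sphere :: "'a set set \<Rightarrow> 'a set \<Rightarrow> 'a set set" where
  "unit_sphere G x = {y \<in> G. y \<subset> x \<or> x \<subset> y}"

definition cliques :: "'a set set \<Rightarrow> 'a set set set" where
  "cliques V = {K. K \<subseteq> V \<and> K \<noteq> {} \<and> finite K \<and>
                  (\<forall>u\<in>K. \<forall>v\<in>K. u \<noteq> v \<longrightarrow> adj1 u v)}"

definition euler_char :: "'a set set \<Rightarrow> int" where
  "euler_char V = (\<Sum>K\<in>cliques V. (-1) ^ (card K - 1))"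

end

theory Submission
  imports Defs
begin

(* Let alt_chain_sum P be the signed number of chains of a finite poset P, the empty chain
   included, i.e. 1 - chi of its order complex. It is multiplicative under joins, and splitting
   off the greatest (or least) element of a nonempty chain gives
     alt_chain_sum P = 1 - sum_y alt_chain_sum P_<y = 1 - sum_y alt_chain_sum P_>y.
   S(x) is the join of the proper faces of x (a subdivided boundary of a simplex, with value
   omega x) and of the faces above x (with value u x, say), so chi S(x) = 1 - omega x * u x and
   the sum in question is sum_x omega x - sum_x u x. By the two splittings both sums equal
   1 - alt_chain_sum G. *)

definition alt_chain_sum :: "'b::order set \<Rightarrow> int" where
  "alt_chain_sum P = (\<Sum>C | C \<subseteq> P \<and> Complete_Partial_Order.chain (\<le>) C. (-1) ^ card C)"

lemma (in ordering) finite_chain_obtains_greatest: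
  assumes "finite C" "C \<noteq> {}" "Complete_Partial_Order.chain (\<^bold>\<le>) C"
  obtains m where "m \<in> C" "\<forall>x\<in>C - {m}. x \<^bold>< m"
proof -
  have "asymp_on C (\<^bold><)" "transp_on C (\<^bold><)"
    by (auto intro: asymp_onI transp_onI dest: asym strict_trans)
  then obtain m where m: "m \<in> C" "\<forall>x\<in>C. x \<noteq> m \<longrightarrow> \<not> m \<^bold>< x"
    using Finite_Set.bex_max_element assms(1,2) by blast
  moreover have "\<forall>x\<in>C - {m}. x \<^bold>< m"
    using m assms(3) by (auto simp: chain_def strict_iff_order)
  ultimately show ?thesis
    using that by blast
qed

lemma (in ordering) sum_nonempty_chains_by_greatest:
  assumes "finite P"
  shows "(\<Sum>C | C \<subseteq> P \<and> Complete_Partial_Order.chain (\<^bold>\<le>) C \<and> C \<noteq> {}. h C) =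
         (\<Sum>y\<in>P. \<Sum>L | L \<subseteq> {z\<in>P. z \<^bold>< y} \<and> Complete_Partial_Order.chain (\<^bold>\<le>) L. h (insert y L))"
proof -
  let ?below = "\<lambda>y. {L. L \<subseteq> {z\<in>P. z \<^bold>< y} \<and> Complete_Partial_Order.chain (\<^bold>\<le>) L}"
  let ?ins = "\<lambda>(y, L). insert y L"
  have inj: "inj_on ?ins (Sigma P ?below)"
  proof (rule inj_onI, clarsimp)
    fix y L y' L'
    assume L: "L \<subseteq> {z\<in>P. z \<^bold>< y}" and L': "L' \<subseteq> {z\<in>P. z \<^bold>< y'}"
      and eq: "insert y L = insert y' L'"
    have "y = y'"
    proof (rule ccontr)
      assume "y \<noteq> y'"
      then have "y' \<in> L" "y \<in> L'"
        using eq by (metis insert_iff)+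
      then show False
        using L L' asym by blast
    qed
    moreover have "y \<notin> L" "y' \<notin> L'"
      using L L' irrefl by blast+
    ultimately show "y = y' \<and> L = L'"
      using eq by (metis insert_ident)
  qed
  have image: "?ins ` Sigma P ?below =
      {C. C \<subseteq> P \<and> Complete_Partial_Order.chain (\<^bold>\<le>) C \<and> C \<noteq> {}}"
  proof (intro equalityI subsetI)
    fix C assume "C \<in> ?ins ` Sigma P ?below"
    then obtain y L where "y \<in> P" "L \<subseteq> {z\<in>P. z \<^bold>< y}"
      "Complete_Partial_Order.chain (\<^bold>\<le>) L" "C = insert y L"
      by auto
    then show "C \<in> {C. C \<subseteq> P \<and> Complete_Partial_Order.chain (\<^bold>\<le>) C \<and> C \<noteq> {}}"
      unfolding chain_def by (blast intro: strict_implies_order refl)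
  next
    fix C assume C: "C \<in> {C. C \<subseteq> P \<and> Complete_Partial_Order.chain (\<^bold>\<le>) C \<and> C \<noteq> {}}"
    then have "finite C"
      using assms finite_subset by blast
    with C obtain m where m: "m \<in> C" "\<forall>x\<in>C - {m}. x \<^bold>< m"
      using finite_chain_obtains_greatest by blast
    then have "(m, C - {m}) \<in> Sigma P ?below"
      using m(1) C by (auto intro: chain_subset)
    moreover have "C = ?ins (m, C - {m})"
      using m(1) by auto
    ultimately show "C \<in> ?ins ` Sigma P ?below"
      by blast
  qed
  have "(\<Sum>y\<in>P. \<Sum>L\<in>?below y. h (insert y L)) = (\<Sum>(y, L)\<in>Sigma P ?below. h (insert y L))"
    using assms by (intro sum.Sigma) auto
  also have "\<dots> = (\<Sum>C\<in>?ins ` Sigma P ?below. h C)"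
    using sum.reindex[OF inj, of h] by (simp add: case_prod_unfold)
  finally show ?thesis
    by (simp only: image)
qed

lemma (in ordering) signed_chain_sum_by_greatest:
  assumes "finite P"
  shows "(\<Sum>C | C \<subseteq> P \<and> Complete_Partial_Order.chain (\<^bold>\<le>) C. (-1::int) ^ card C) =
         1 - (\<Sum>y\<in>P. \<Sum>L | L \<subseteq> {z\<in>P. z \<^bold>< y} \<and> Complete_Partial_Order.chain (\<^bold>\<le>) L. (-1) ^ card L)"
proof -
  let ?chains = "\<lambda>Q. {C. C \<subseteq> Q \<and> Complete_Partial_Order.chain (\<^bold>\<le>) C}"
  have "finite (?chains P)"
    using assms by (auto intro: finite_subset[of _ "Pow P"])
  moreover have "{} \<in> ?chains P"
    by (simp add: chain_empty)
  ultimately have "(\<Sum>C\<in>?chains P. (-1::int) ^ card C) = 1 + (\<Sum>C\<in>?chains P - {{}}. (-1) ^ card C)"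
    by (simp add: sum.remove[of _ "{}"])
  also have "?chains P - {{}} = {C. C \<subseteq> P \<and> Complete_Partial_Order.chain (\<^bold>\<le>) C \<and> C \<noteq> {}}"
    by blast
  also have "(\<Sum>C\<in>\<dots>. (-1::int) ^ card C) = (\<Sum>y\<in>P. \<Sum>L\<in>?chains {z\<in>P. z \<^bold>< y}. (-1) ^ card (insert y L))"
    using assms by (rule sum_nonempty_chains_by_greatest)
  also have "\<dots> = (\<Sum>y\<in>P. \<Sum>L\<in>?chains {z\<in>P. z \<^bold>< y}. - ((-1) ^ card L))"
  proof (rule sum.cong[OF HOL.refl], rule sum.cong[OF HOL.refl])
    fix y L assume "y \<in> P" "L \<in> ?chains {z\<in>P. z \<^bold>< y}"
    then have "finite L" "y \<notin> L"
      using assms irrefl by (auto intro: finite_subset)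
    then show "(-1::int) ^ card (insert y L) = - ((-1) ^ card L)"
      by simp
  qed
  finally show ?thesis
    by (simp add: sum_negf)
qed

lemma alt_chain_sum_by_greatest:
  "finite P \<Longrightarrow> alt_chain_sum P = 1 - (\<Sum>y\<in>P. alt_chain_sum {z\<in>P. z < y})"
  unfolding alt_chain_sum_def by (rule order.signed_chain_sum_by_greatest)

lemma alt_chain_sum_by_least:
  fixes P :: "'b::order set"
  assumes "finite P"
  shows "alt_chain_sum P = 1 - (\<Sum>y\<in>P. alt_chain_sum {z\<in>P. y < z})"
proof -
  have "Complete_Partial_Order.chain (\<ge>) = Complete_Partial_Order.chain ((\<le>) :: 'b \<Rightarrow> _)"
    by (auto simp: fun_eq_iff chain_def)
  with dual_order.signed_chain_sum_by_greatest[OF assms] show ?thesis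
    by (simp add: alt_chain_sum_def)
qed

lemma alt_chain_sum_join:
  fixes A B :: "'b::order set"
  assumes "finite A" "finite B" and below: "\<forall>a\<in>A. \<forall>b\<in>B. a < b"
  shows "alt_chain_sum (A \<union> B) = alt_chain_sum A * alt_chain_sum B"
proof -
  let ?chains = "\<lambda>Q. {C. C \<subseteq> Q \<and> Complete_Partial_Order.chain (\<le>) C}"
  have "A \<inter> B = {}"
    using below by blast
  have "alt_chain_sum A * alt_chain_sum B =
      (\<Sum>(L, U)\<in>?chains A \<times> ?chains B. (-1) ^ card L * (-1) ^ card U)"
    by (simp add: alt_chain_sum_def sum_product sum.cartesian_product)
  also have "\<dots> = (\<Sum>(L, U)\<in>?chains A \<times> ?chains B. (-1) ^ card (L \<union> U))"
  proof (intro sum.cong refl, clarify)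
    fix L U assume "L \<subseteq> A" "U \<subseteq> B"
    then have "card (L \<union> U) = card L + card U"
      using assms(1,2) \<open>A \<inter> B = {}\<close> by (intro card_Un_disjoint) (auto intro: finite_subset)
    then show "(-1::int) ^ card L * (-1) ^ card U = (-1) ^ card (L \<union> U)"
      by (simp add: power_add)
  qed
  also have "\<dots> = alt_chain_sum (A \<union> B)"
    unfolding alt_chain_sum_def
  proof (rule sum.reindex_bij_witness[where i = "\<lambda>K. (K \<inter> A, K \<inter> B)" and j = "\<lambda>(L, U). L \<union> U"])
    fix p assume "p \<in> ?chains A \<times> ?chains B"
    then obtain L U where p: "p = (L, U)" "L \<in> ?chains A" "U \<in> ?chains B"
      by auto
    then show "((\<lambda>(L, U). L \<union> U) p \<inter> A, (\<lambda>(L, U). L \<union> U) p \<inter> B) = p"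
      using \<open>A \<inter> B = {}\<close> by auto
    show "(\<lambda>(L, U). L \<union> U) p \<in> ?chains (A \<union> B)"
      using p below unfolding chain_def by (blast dest: less_imp_le)
    show "(-1::int) ^ card ((\<lambda>(L, U). L \<union> U) p) = (case p of (L, U) \<Rightarrow> (-1) ^ card (L \<union> U))"
      by (simp add: p)
  next
    fix K assume K: "K \<in> ?chains (A \<union> B)"
    then show "(\<lambda>(L, U). L \<union> U) (K \<inter> A, K \<inter> B) = K"
      by auto
    show "(K \<inter> A, K \<inter> B) \<in> ?chains A \<times> ?chains B"
      using K by (auto intro: chain_subset)
  qed
  finally show ?thesis ..
qed

lemma omega_eq_uminus_power_card: "finite x \<Longrightarrow> x \<noteq> {} \<Longrightarrow> omega x = - ((-1) ^ card x)"
  by (cases "card x") (simp_all add: omega_def)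

lemma omega_mult_self: "omega x * omega x = 1"
  by (simp add: omega_def flip: power_add)

lemma alternating_sum_Pow_eq_0:
  assumes "finite x" "x \<noteq> {}"
  shows "(\<Sum>y\<in>Pow x. (-1::int) ^ card y) = 0"
  using assms card_subsupersets_even_odd[of x "{}"]
  by (intro sum_alternating_cancels) (auto simp: Pow_def)

lemma alt_chain_sum_proper_faces:
  assumes "finite x" "x \<noteq> {}"
  shows "alt_chain_sum (Pow x - {{}, x}) = omega x"
  using assms
proof (induction "card x" arbitrary: x rule: less_induct)
  case less
  let ?faces = "\<lambda>x. Pow x - {{}, x}"
  have IH: "alt_chain_sum {z \<in> ?faces x. z < y} = - ((-1) ^ card y)" if y: "y \<in> ?faces x" for y
  proof -
    have "{z \<in> ?faces x. z < y} = ?faces y"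
      using y by auto
    moreover have "finite y" "card y < card x"
      using y less.prems by (auto intro: finite_subset psubset_card_mono)
    ultimately show ?thesis
      using less.hyps y by (simp add: omega_eq_uminus_power_card)
  qed
  have "alt_chain_sum (?faces x) = 1 - (\<Sum>y\<in>?faces x. alt_chain_sum {z \<in> ?faces x. z < y})"
    using less.prems by (intro alt_chain_sum_by_greatest) simp
  also have "\<dots> = 1 - (\<Sum>y\<in>?faces x. - ((-1) ^ card y))"
    by (rule arg_cong[where f = "\<lambda>s. 1 - s"], rule sum.cong[OF refl], rule IH)
  also have "\<dots> = 1 + (\<Sum>y\<in>?faces x. (-1) ^ card y)"
    by (simp add: sum_negf)
  also have "\<dots> = 1 + (\<Sum>y\<in>Pow x. (-1) ^ card y) - (\<Sum>y\<in>{{}, x}. (-1) ^ card y)"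
    using less.prems by (subst sum_diff) auto
  also have "\<dots> = - ((-1) ^ card x)"
    using less.prems by (simp add: alternating_sum_Pow_eq_0)
  finally show ?case
    using less.prems by (simp add: omega_eq_uminus_power_card)
qed

lemma euler_char_eq_alt_chain_sum:
  assumes "finite V"
  shows "euler_char V = 1 - alt_chain_sum V"
proof -
  let ?chains = "{C. C \<subseteq> V \<and> Complete_Partial_Order.chain (\<le>) C}"
  have "finite ?chains" "{} \<in> ?chains"
    using assms by (auto intro: finite_subset[of _ "Pow V"] chain_empty)
  then have sum_chains: "alt_chain_sum V = 1 + (\<Sum>C\<in>?chains - {{}}. (-1) ^ card C)"
    unfolding alt_chain_sum_def by (simp add: sum.remove[of _ "{}"])
  have "cliques V = ?chains - {{}}"
    using assms by (auto simp: cliques_def adj1_def chain_def intro: finite_subset)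
  then have "euler_char V = (\<Sum>C\<in>?chains - {{}}. (-1) ^ (card C - 1))"
    by (simp add: euler_char_def)
  also have "\<dots> = (\<Sum>C\<in>?chains - {{}}. - ((-1) ^ card C))"
  proof (rule sum.cong[OF refl])
    fix C assume "C \<in> ?chains - {{}}"
    then have "card C \<noteq> 0"
      using assms by (auto dest: finite_subset)
    then show "(-1::int) ^ (card C - 1) = - ((-1) ^ card C)"
      by (cases "card C") simp_all
  qed
  finally show ?thesis
    by (simp add: sum_chains sum_negf)
qed

lemma alt_chain_sum_faces_below:
  assumes "simplicial_complex G" "x \<in> G"
  shows "alt_chain_sum {y \<in> G. y \<subset> x} = omega x"
proof -
  have "{y \<in> G. y \<subset> x} = Pow x - {{}, x}" "finite x" "x \<noteq> {}"
    using assms unfolding simplicial_complex_def by blast+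
  then show ?thesis
    by (simp add: alt_chain_sum_proper_faces)
qed

lemma alt_chain_sum_unit_sphere:
  assumes "simplicial_complex G" "x \<in> G"
  shows "alt_chain_sum (unit_sphere G x) = omega x * alt_chain_sum {y \<in> G. x \<subset> y}"
proof -
  have "finite G"
    using assms by (simp add: simplicial_complex_def)
  have "unit_sphere G x = {y \<in> G. y \<subset> x} \<union> {y \<in> G. x \<subset> y}"
    by (auto simp: unit_sphere_def)
  also have "alt_chain_sum \<dots> = alt_chain_sum {y \<in> G. y \<subset> x} * alt_chain_sum {y \<in> G. x \<subset> y}"
    using \<open>finite G\<close> by (intro alt_chain_sum_join) auto
  finally show ?thesis
    using assms by (simp add: alt_chain_sum_faces_below)
qed

theorem mainTheorem12:
  fixes G :: "'a set set"
  assumes "simplicial_complex G"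
  shows "(\<Sum>x\<in>G. omega x * euler_char (unit_sphere G x)) = 0"
proof -
  have "finite G"
    using assms by (simp add: simplicial_complex_def)
  define up where "up x = alt_chain_sum {y \<in> G. x \<subset> y}" for x
  have sphere: "euler_char (unit_sphere G x) = 1 - omega x * up x" if "x \<in> G" for x
  proof -
    have "finite (unit_sphere G x)"
      using \<open>finite G\<close> by (simp add: unit_sphere_def)
    then show ?thesis
      by (simp add: euler_char_eq_alt_chain_sum alt_chain_sum_unit_sphere[OF assms that] up_def)
  qed
  have "(\<Sum>x\<in>G. up x) = 1 - alt_chain_sum G"
    using alt_chain_sum_by_least[OF \<open>finite G\<close>] by (simp add: up_def)
  also have "\<dots> = (\<Sum>x\<in>G. alt_chain_sum {y \<in> G. y \<subset> x})"
    using alt_chain_sum_by_greatest[OF \<open>finite G\<close>] by simp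
  also have "\<dots> = (\<Sum>x\<in>G. omega x)"
    using assms by (intro sum.cong) (simp_all add: alt_chain_sum_faces_below)
  finally have "(\<Sum>x\<in>G. up x) = (\<Sum>x\<in>G. omega x)" .
  moreover have "(\<Sum>x\<in>G. omega x * euler_char (unit_sphere G x)) = (\<Sum>x\<in>G. omega x - up x)"
    by (intro sum.cong) (simp_all add: sphere right_diff_distrib omega_mult_self flip: mult.assoc)
  ultimately show ?thesis
    by (simp add: sum_subtractf)
qed

end
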